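(* Let $\mathcal{A}\subseteq\mathbb{R}^3$ be measurable with finite positive measure, $k_0>0$, $\eta>0$, $\sigma^2>0$, and for $k\in\{1,2\}$ let $\mathsf{G}_k\in L^2(\mathcal{A})$ with $\mathsf{g}_k=\int_{\mathcal{A}}|\mathsf{G}_k(\mathbf{r})|^2\mathrm{d}\mathbf{r}>0$, $\mathsf{H}_k(\mathbf{r})=\frac{\mathrm{j}k_0\eta}{\sqrt{4\pi}}\mathsf{G}_k(\mathbf{r})$, $A_{\mathsf{u},k}>0$, $\mathsf{J}_{\mathsf{ul},k}\in\mathbb{C}$, and $\overline{\gamma}_{\mathsf{ul},k}=\frac{A_{\mathsf{u},k}^2|\mathsf{J}_{\mathsf{ul},k}|^2k_0^2\eta^2}{4\pi\sigma^2}$. Let $\rho=\frac{\int_{\mathcal{A}}\mathsf{G}_1^*(\mathbf{r})\mathsf{G}_2(\mathbf{r})\mathrm{d}\mathbf{r}}{\sqrt{\mathsf{g}_1\mathsf{g}_2}}$. Let $\mu_1=-\frac{1}{\mathsf{g}_1}\pm\frac{1}{\mathsf{g}_1\sqrt{1+\overline{\gamma}_{\mathsf{ul},1}\mathsf{g}_1}}$ and $\mathsf{W}_{\mathsf{Z}}(\mathbf{r}',\mathbf{r})=\delta(\mathbf{r}'-\mathbf{r})+\mu_1\mathsf{G}_1(\mathbf{r}')\mathsf{G}_1^*(\mathbf{r})$ (the whitening transformation of the interference-plus-noise field $\mathsf{Z}(\mathbf{r})=\mathsf{H}_1(\mathbf{r})\mathsf{J}_{\mathsf{ul},1}A_{\mathsf{u},1}s_{\mathsf{ul},1}+\mathsf{N}_{\mathsf{ul}}(\mathbf{r})$),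 and let $\overline{\mathsf{H}}_2(\mathbf{r}')=\int_{\mathcal{A}}\mathsf{W}_{\mathsf{Z}}(\mathbf{r}',\mathbf{r})\mathsf{H}_2(\mathbf{r})\mathrm{d}\mathbf{r}$. Then the SNR for decoding user 2's symbol obtained by first whitening with $\mathsf{W}_{\mathsf{Z}}$ and then applying the MRC detector matched to $\overline{\mathsf{H}}_2$, namely $$\gamma_{\mathsf{ul},2}=\frac{A_{\mathsf{u},2}^2|\mathsf{J}_{\mathsf{ul},2}|^2}{\sigma^2}\int_{\mathcal{A}}|\overline{\mathsf{H}}_2(\mathbf{r}')|^2\mathrm{d}\mathbf{r}',$$ equals $$\gamma_{\mathsf{ul},2}=\overline{\gamma}_{\mathsf{ul},2}\mathsf{g}_2\left(1-\frac{\overline{\gamma}_{\mathsf{ul},1}\mathsf{g}_1|\rho|^2}{1+\overline{\gamma}_{\mathsf{ul},1}\mathsf{g}_1}\right).$$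
   Context: $\delta$ is the Dirac delta, so $\overline{\mathsf{H}}_2(\mathbf{r}')=\mathsf{H}_2(\mathbf{r}')+\mu_1\mathsf{G}_1(\mathbf{r}')\int_{\mathcal{A}}\mathsf{G}_1^*(\mathbf{r})\mathsf{H}_2(\mathbf{r})\mathrm{d}\mathbf{r}$. In the paper, $\mathcal{A}$ is the base-station continuous aperture and $\mathsf{G}_k(\mathbf{r})=\frac{e^{-\mathrm{j}k_0\|\mathbf{r}-\mathbf{s}_k\|}}{\sqrt{4\pi}\|\mathbf{r}-\mathbf{s}_k\|}\sqrt{\frac{|\mathbf{e}^{\mathsf{T}}(\mathbf{s}_k-\mathbf{r})|}{\|\mathbf{r}-\mathbf{s}_k\|}}$ for user locations $\mathbf{s}_k\notin\overline{\mathcal{A}}$ and unit normal $\mathbf{e}$ of the aperture; $\mathsf{N}_{\mathsf{ul}}$ is white Gaussian noise of intensity $\sigma^2$, $s_{\mathsf{ul},k}$ unit-power symbols. *)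

theory Defs
  imports "HOL-Analysis.Analysis"
begin

definition L2_on :: "(real^3) set \<Rightarrow> (real^3 \<Rightarrow> complex) \<Rightarrow> bool" where
  "L2_on A G \<longleftrightarrow> set_borel_measurable lebesgue A G \<and>
     set_integrable lebesgue A (\<lambda>r. (cmod (G r))\<^sup>2)"

end

theory Submission
  imports Defs
begin

text \<open>Since H2 = c G2 with |c|^2 = k0^2 eta^2 / (4 pi), the whitened channel is
c (G2 + \<mu>1 I G1) with I = \<integral> cnj G1 G2, and expanding its squared L2 norm gives
|c|^2 (g2 + (2 \<mu>1 + \<mu>1^2 g1) |I|^2), where |I|^2 = |\<rho>|^2 g1 g2.
With x = gb1 g1 one has \<mu>1 g1 + 1 = \<plusminus>1 / sqrt (1 + x), so for either sign
2 \<mu>1 g1 + \<mu>1^2 g1^2 = (\<mu>1 g1 + 1)^2 - 1 = - x / (1 + x).\<close>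

lemma L2_on_set_integrable_mult_cnj:
  assumes F: "L2_on A F" and G: "L2_on A G"
  shows "set_integrable lebesgue A (\<lambda>r. F r * cnj (G r))"
proof -
  have mF: "(\<lambda>x. indicator A x *\<^sub>R F x) \<in> borel_measurable lebesgue"
   and mG: "(\<lambda>x. indicator A x *\<^sub>R G x) \<in> borel_measurable lebesgue"
    using F G unfolding L2_on_def set_borel_measurable_def by auto
  have iF: "integrable lebesgue (\<lambda>x. indicator A x *\<^sub>R (cmod (F x))\<^sup>2)"
   and iG: "integrable lebesgue (\<lambda>x. indicator A x *\<^sub>R (cmod (G x))\<^sup>2)"
    using F G unfolding L2_on_def set_integrable_def by auto
  have "(\<lambda>x. cnj (indicator A x *\<^sub>R G x)) \<in> borel_measurable lebesgue"
    by (rule borel_measurable_continuous_on[OF _ mG]) (intro continuous_intros)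
  with mF have "(\<lambda>x. (indicator A x *\<^sub>R F x) * cnj (indicator A x *\<^sub>R G x)) \<in> borel_measurable lebesgue"
    by measurable
  moreover have "(\<lambda>x. (indicator A x *\<^sub>R F x) * cnj (indicator A x *\<^sub>R G x)) =
      (\<lambda>x. indicator A x *\<^sub>R (F x * cnj (G x)))"
    by (auto simp: indicator_def)
  ultimately have m: "(\<lambda>x. indicator A x *\<^sub>R (F x * cnj (G x))) \<in> borel_measurable lebesgue"
    by simp
  have "cmod (F x) * cmod (G x) \<le> (cmod (F x))\<^sup>2 + (cmod (G x))\<^sup>2" for x
    using sum_squares_bound[of "cmod (F x)" "cmod (G x)"]
      mult_nonneg_nonneg[OF norm_ge_zero norm_ge_zero, of "F x" "G x"] by linarith
  then have "norm (indicator A x *\<^sub>R (F x * cnj (G x)))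
      \<le> norm (indicator A x *\<^sub>R (cmod (F x))\<^sup>2 + indicator A x *\<^sub>R (cmod (G x))\<^sup>2)" for x
    by (cases "x \<in> A") (simp_all add: norm_mult)
  then show ?thesis
    unfolding set_integrable_def
    by (intro Bochner_Integration.integrable_bound[OF Bochner_Integration.integrable_add[OF iF iG] m])
       simp
qed

lemma set_integral_Re:
  fixes f :: "'a \<Rightarrow> complex"
  assumes "set_integrable M A f"
  shows "(LINT x:A|M. Re (f x)) = Re (LINT x:A|M. f x)"
  using assms unfolding set_integrable_def set_lebesgue_integral_def
  by (subst integral_Re[symmetric]) (auto intro!: Bochner_Integration.integral_cong split: split_indicator)

lemma set_integrable_Re:
  fixes f :: "'a \<Rightarrow> complex"
  assumes "set_integrable M A f"
  shows "set_integrable M A (\<lambda>x. Re (f x))"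
  using integrable_Re[OF assms[unfolded set_integrable_def]] unfolding set_integrable_def by simp

lemma cmod_lincomb_squared:
  fixes a b u v :: complex
  shows "(cmod (a * u + b * v))\<^sup>2
    = (cmod a)\<^sup>2 * (cmod u)\<^sup>2 + 2 * Re (a * cnj b * (u * cnj v)) + (cmod b)\<^sup>2 * (cmod v)\<^sup>2"
  unfolding cmod_power2 by (simp add: power2_eq_square algebra_simps)

lemma L2_on_norm_lincomb:
  assumes F: "L2_on A F" and G: "L2_on A G"
  shows "(LINT r:A|lebesgue. (cmod (a * F r + b * G r))\<^sup>2)
    = (cmod a)\<^sup>2 * (LINT r:A|lebesgue. (cmod (F r))\<^sup>2)
      + 2 * Re (a * cnj b * (LINT r:A|lebesgue. F r * cnj (G r)))
      + (cmod b)\<^sup>2 * (LINT r:A|lebesgue. (cmod (G r))\<^sup>2)"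
proof -
  have FG: "set_integrable lebesgue A (\<lambda>r. F r * cnj (G r))"
    by (rule L2_on_set_integrable_mult_cnj[OF F G])
  have sqF: "set_integrable lebesgue A (\<lambda>r. (cmod (F r))\<^sup>2)"
   and sqG: "set_integrable lebesgue A (\<lambda>r. (cmod (G r))\<^sup>2)"
    using F G unfolding L2_on_def by auto
  have FG': "set_integrable lebesgue A (\<lambda>r. a * cnj b * (F r * cnj (G r)))"
    using FG by simp
  define h where "h r = Re (a * cnj b * (F r * cnj (G r)))" for r
  have cross: "(LINT r:A|lebesgue. h r) = Re (a * cnj b * (LINT r:A|lebesgue. F r * cnj (G r)))"
    unfolding h_def by (simp only: set_integral_Re[OF FG'] set_integral_mult_right)
  have "set_integrable lebesgue A h"
    unfolding h_def by (rule set_integrable_Re[OF FG'])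
  then have "(LINT r:A|lebesgue. (cmod a)\<^sup>2 * (cmod (F r))\<^sup>2 + 2 * h r + (cmod b)\<^sup>2 * (cmod (G r))\<^sup>2)
      = (cmod a)\<^sup>2 * (LINT r:A|lebesgue. (cmod (F r))\<^sup>2) + 2 * (LINT r:A|lebesgue. h r)
        + (cmod b)\<^sup>2 * (LINT r:A|lebesgue. (cmod (G r))\<^sup>2)"
    using sqF sqG by (simp add: set_integral_add)
  then show ?thesis
    unfolding cmod_lincomb_squared cross by (simp only: h_def)
qed

lemma L2_on_norm_add_projection:
  fixes c :: complex and \<mu> :: real
  assumes F: "L2_on A F" and G: "L2_on A G"
  shows "(LINT r:A|lebesgue.
      (cmod (c * F r + of_real \<mu> * G r * (LINT t:A|lebesgue. cnj (G t) * (c * F t))))\<^sup>2)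
    = (cmod c)\<^sup>2 * ((LINT r:A|lebesgue. (cmod (F r))\<^sup>2)
      + (2 * \<mu> + \<mu>\<^sup>2 * (LINT r:A|lebesgue. (cmod (G r))\<^sup>2))
        * (cmod (LINT r:A|lebesgue. cnj (G r) * F r))\<^sup>2)"
proof -
  define I where "I = (LINT r:A|lebesgue. cnj (G r) * F r)"
  have projection: "(LINT t:A|lebesgue. cnj (G t) * (c * F t)) = c * I"
    unfolding I_def by (simp add: mult.left_commute)
  have correlation: "(LINT r:A|lebesgue. F r * cnj (G r)) = I"
    unfolding I_def by (simp add: mult.commute)
  have lincomb: "c * F r + of_real \<mu> * G r * (c * I) = c * F r + (c * of_real \<mu> * I) * G r" for r
    by (simp add: algebra_simps)
  have cross_term: "Re (c * cnj (c * of_real \<mu> * I) * I) = \<mu> * (cmod c)\<^sup>2 * (cmod I)\<^sup>2"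
    unfolding cmod_power2 by (simp add: algebra_simps power2_eq_square)
  show ?thesis
    unfolding projection I_def[symmetric] lincomb L2_on_norm_lincomb[OF F G] correlation cross_term
    by (simp add: norm_mult power_mult_distrib algebra_simps)
qed

lemma whitening_correction_eq:
  fixes g x s \<mu> :: real
  assumes "g > 0" and "x \<ge> 0" and "s\<^sup>2 = 1"
    and "\<mu> = - 1 / g + s / (g * sqrt (1 + x))"
  shows "2 * \<mu> * g + \<mu>\<^sup>2 * g\<^sup>2 = - x / (1 + x)"
proof -
  have "\<mu> * g + 1 = s / sqrt (1 + x)"
    using assms by (simp add: field_simps)
  then have "(\<mu> * g + 1)\<^sup>2 = 1 / (1 + x)"
    using assms by (simp add: power_divide)
  also have "\<dots> = 1 - x / (1 + x)"
    using assms(2) by (simp add: field_simps)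
  finally show ?thesis
    by (simp add: power2_eq_square algebra_simps)
qed

theorem theorem1:
  fixes A :: "(real^3) set"
    and G1 G2 H1 H2 Hbar2 :: "real^3 \<Rightarrow> complex"
    and k0 eta sigma2 Au1 Au2 g1 g2 gb1 gb2 s mu1 gamma2 :: real
    and J1 J2 rho :: complex
  assumes "A \<in> sets lebesgue" and "emeasure lebesgue A < \<infinity>" and "emeasure lebesgue A > 0"
    and "k0 > 0" and "eta > 0" and "sigma2 > 0"
    and "L2_on A G1" and "L2_on A G2"
    and "g1 = (LINT r:A|lebesgue. (cmod (G1 r))\<^sup>2)" and "g2 = (LINT r:A|lebesgue. (cmod (G2 r))\<^sup>2)"
    and "g1 > 0" and "g2 > 0"
    and "\<And>r. H1 r = (\<i> * of_real (k0 * eta / sqrt (4 * pi))) * G1 r"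
    and "\<And>r. H2 r = (\<i> * of_real (k0 * eta / sqrt (4 * pi))) * G2 r"
    and "Au1 > 0" and "Au2 > 0"
    and "gb1 = Au1\<^sup>2 * (cmod J1)\<^sup>2 * k0\<^sup>2 * eta\<^sup>2 / (4 * pi * sigma2)"
    and "gb2 = Au2\<^sup>2 * (cmod J2)\<^sup>2 * k0\<^sup>2 * eta\<^sup>2 / (4 * pi * sigma2)"
    and "rho = (LINT r:A|lebesgue. cnj (G1 r) * G2 r) / of_real (sqrt (g1 * g2))"
    and "s = 1 \<or> s = -1"
    and "mu1 = - 1 / g1 + s / (g1 * sqrt (1 + gb1 * g1))"
    and "\<And>r'. Hbar2 r' = H2 r' + of_real mu1 * G1 r' * (LINT r:A|lebesgue. cnj (G1 r) * H2 r)"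
    and "gamma2 = Au2\<^sup>2 * (cmod J2)\<^sup>2 / sigma2 * (LINT r':A|lebesgue. (cmod (Hbar2 r'))\<^sup>2)"
  shows "gamma2 = gb2 * g2 * (1 - gb1 * g1 * (cmod rho)\<^sup>2 / (1 + gb1 * g1))"
proof -
  define c where "c = \<i> * complex_of_real (k0 * eta / sqrt (4 * pi))"
  define x where "x = gb1 * g1"
  have Hbar2_eq: "Hbar2 r = c * G2 r + of_real mu1 * G1 r * (LINT t:A|lebesgue. cnj (G1 t) * (c * G2 t))" for r
    unfolding assms(22) assms(14) c_def ..
  have whitened_gain: "(LINT r':A|lebesgue. (cmod (Hbar2 r'))\<^sup>2)
      = (cmod c)\<^sup>2 * (g2 + (2 * mu1 + mu1\<^sup>2 * g1) * (cmod (LINT r:A|lebesgue. cnj (G1 r) * G2 r))\<^sup>2)"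
    unfolding Hbar2_eq L2_on_norm_add_projection[OF assms(8,7)] assms(9,10) ..
  have c_sq: "(cmod c)\<^sup>2 = k0\<^sup>2 * eta\<^sup>2 / (4 * pi)"
    unfolding c_def norm_mult norm_ii norm_of_real power2_abs
    by (simp add: power_divide power_mult_distrib)
  have correlation_sq: "(cmod (LINT r:A|lebesgue. cnj (G1 r) * G2 r))\<^sup>2 = (cmod rho)\<^sup>2 * g1 * g2"
    unfolding assms(19) using assms(11,12) by (simp add: norm_divide power_divide)
  have "0 \<le> x"
    unfolding x_def assms(17) using assms(6,11) by simp
  have correction: "2 * mu1 * g1 + mu1\<^sup>2 * g1\<^sup>2 = - x / (1 + x)"
  proof (rule whitening_correction_eq[OF assms(11) \<open>0 \<le> x\<close>])
    show "s\<^sup>2 = 1"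
      using assms(20) by auto
  qed (simp add: assms(21) x_def)
  have "gamma2 = gb2 * g2 * (1 + (2 * mu1 * g1 + mu1\<^sup>2 * g1\<^sup>2) * (cmod rho)\<^sup>2)"
    unfolding assms(23,18) whitened_gain c_sq correlation_sq using assms(6)
    by (simp add: field_simps power2_eq_square)
  also have "\<dots> = gb2 * g2 * (1 - x * (cmod rho)\<^sup>2 / (1 + x))"
    unfolding correction using \<open>0 \<le> x\<close> by (simp add: field_simps)
  finally show ?thesis
    unfolding x_def .
qed

end
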